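(* Let $n,d\ge1$, $p>d$, $\Delta\in\mathbb{R}^{nd\times nd}$ symmetric with $d\times d$ blocks, $\Delta_{ii}=0$, $Z^{\top}=[I_d,\dots,I_d]$, $A=ZZ^{\top}+\Delta$, $f(S)=\langle A,SS^{\top}\rangle$, $\delta>0$. Suppose $S$ is a second-order critical point of $f$ with $d_F(S,Z)\le\delta\sqrt{d/n}\,\|\Delta\|_{\mathrm{op}}$. Then for every $1\le i\le n$, \[ \lambda_{\min}(\Lambda_{ii})\ge n-\frac{\delta^2d\|\Delta\|_{\mathrm{op}}^2}{2n}-\max_{1\le k\le n}\Big\|\sum_{j\ne k}\Delta_{kj}S_j\Big\|_{\mathrm{op}}, \] and \[ \max_{1\le i\le n}\Big\|\sum_{j\ne i}\Delta_{ij}S_j\Big\|_{\mathrm{op}}\le\delta\sqrt{\frac dn}\,\|\Delta\|_{\mathrm{op}}\max_{1\le i\le n}\|\Delta_i\|_{\mathrm{op}}+\max_{1\le i\le n}\|\Delta_i^{\top}Z\|_{\mathrm{op}}. \]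
   Context: $S\in\mathbb{R}^{nd\times p}$ has $d\times p$ blocks $S_i$ with $S_iS_i^{\top}=I_d$; $A_{ij}=I_d+\Delta_{ij}$; $\Delta_i^{\top}=[\Delta_{i1},\dots,\Delta_{in}]$ is the $i$-th block row of $\Delta$ ($\Delta_i$ the $i$-th block column), and $\Delta_i^{\top}Z=\sum_j\Delta_{ij}$. $\Lambda_{ii}=\frac12\sum_j(S_iS_j^{\top}A_{ji}+A_{ij}S_jS_i^{\top})$; $T_{S_i}=\{Y\in\mathbb{R}^{d\times p}:S_iY^{\top}+YS_i^{\top}=0\}$. $S$ is a second-order critical point if $\sum_jA_{ij}S_j=\Lambda_{ii}S_i$ for all $i$ and $\sum_i\langle\Lambda_{ii},\dot S_i\dot S_i^{\top}\rangle\ge\sum_{i,j}\langle A_{ij},\dot S_i\dot S_j^{\top}\rangle$ for all $\dot S_i\in T_{S_i}$. $d_F(S,Z)=\min\{(\sum_i\|S_i-Q\|_F^2)^{1/2}:QQ^{\top}=I_d,Q\in\mathbb{R}^{d\times p}\}$. *)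

theory Defs
  imports "HOL-Analysis.Analysis"
begin

text \<open>Block conventions. n is a natural number (number of blocks); the block sizes d and p
are the cardinalities of finite index types 'd and 'p. A d x p block is a value of type
real^'p^'d, a d x d block of type real^'d^'d. The nd x nd matrix Delta is given by its
blocks Delta i j (i, j < n); the nd x p matrix S by its blocks S i (i < n).
Inner product and norm on matrices are the Frobenius ones (inner/norm of real^'a^'b).\<close>

definition Ablk :: "(nat \<Rightarrow> nat \<Rightarrow> real^'d^'d) \<Rightarrow> nat \<Rightarrow> nat \<Rightarrow> real^'d^'d" where
  "Ablk \<Delta> i j = mat 1 + \<Delta> i j"

definition Lam :: "nat \<Rightarrow> (nat \<Rightarrow> nat \<Rightarrow> real^'d^'d) \<Rightarrow> (nat \<Rightarrow> real^'p^'d) \<Rightarrow> nat \<Rightarrow> real^'d^'d" where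
  "Lam n \<Delta> S i = (1/2) *\<^sub>R (\<Sum>j<n. S i ** transpose (S j) ** Ablk \<Delta> j i
                                   + Ablk \<Delta> i j ** S j ** transpose (S i))"

definition tangent :: "real^'p^'d \<Rightarrow> (real^'p^'d) set" where
  "tangent Si = {Y. Si ** transpose Y + Y ** transpose Si = 0}"

definition second_order_critical ::
  "nat \<Rightarrow> (nat \<Rightarrow> nat \<Rightarrow> real^'d^'d) \<Rightarrow> (nat \<Rightarrow> real^'p^'d) \<Rightarrow> bool" where
  "second_order_critical n \<Delta> S \<longleftrightarrow>
     (\<forall>i<n. (\<Sum>j<n. Ablk \<Delta> i j ** S j) = Lam n \<Delta> S i ** S i) \<and>
     (\<forall>Sd :: nat \<Rightarrow> real^'p^'d. (\<forall>i<n. Sd i \<in> tangent (S i)) \<longrightarrow>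
        (\<Sum>i<n. Lam n \<Delta> S i \<bullet> (Sd i ** transpose (Sd i)))
          \<ge> (\<Sum>i<n. \<Sum>j<n. Ablk \<Delta> i j \<bullet> (Sd i ** transpose (Sd j))))"

text \<open>d_F(S,Z) = min over Q with Q Q^T = I of (sum_i ||S_i - Q||_F^2)^(1/2)
  (the minimum exists by compactness, so Inf = min).\<close>
definition dF :: "nat \<Rightarrow> (nat \<Rightarrow> real^'p^'d) \<Rightarrow> real" where
  "dF n S = Inf {sqrt (\<Sum>i<n. (norm (S i - Q))\<^sup>2) | Q :: real^'p^'d. Q ** transpose Q = mat 1}"

definition opnorm :: "real^'a^'b \<Rightarrow> real" where
  "opnorm M = onorm (\<lambda>x. M *v x)"

definition blk_opnorm :: "nat \<Rightarrow> (nat \<Rightarrow> nat \<Rightarrow> real^'d^'d) \<Rightarrow> real" where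
  "blk_opnorm n \<Delta> = Sup {sqrt (\<Sum>i<n. (norm (\<Sum>j<n. \<Delta> i j *v x j))\<^sup>2) | x :: nat \<Rightarrow> real^'d.
                          (\<Sum>j<n. (norm (x j))\<^sup>2) = 1}"

text \<open>Operator norm of the i-th block column Delta_i (an nd x d matrix with blocks Delta j i).\<close>
definition col_opnorm :: "nat \<Rightarrow> (nat \<Rightarrow> nat \<Rightarrow> real^'d^'d) \<Rightarrow> nat \<Rightarrow> real" where
  "col_opnorm n \<Delta> i = Sup {sqrt (\<Sum>j<n. (norm (\<Delta> j i *v y))\<^sup>2) | y :: real^'d. norm y = 1}"

definition lambda_min :: "real^'d^'d \<Rightarrow> real" where
  "lambda_min M = Min {l. \<exists>v. v \<noteq> 0 \<and> M *v v = l *\<^sub>R v}"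

end

theory Submission
  imports Defs
begin

text \<open>Both bounds are first proved with an arbitrary Q (Q Q^T = I) in place of the optimal
  one in d_F(S,Z), and Q is then optimised out. Let v be a unit eigenvector of \<Lambda>_ii with
  eigenvalue l. The second-order condition tested on the direction v w^T in block i, where
  S_i w = 0 (such w exists as p > d), gives l \<ge> 1. First-order criticality gives
  \<Lambda>_ii S_i = \<Sigma>_j S_j + \<Sigma>_j \<Delta>_ij S_j, hence
  l = |v^T \<Lambda>_ii S_i| \<ge> |v^T \<Sigma>_j S_j| - ||\<Sigma>_j \<Delta>_ij S_j||, and comparing the unit
  vectors v^T S_j with v^T Q yields |v^T \<Sigma>_j S_j| \<ge> n - \<Sigma>_j |S_j - Q|^2 / 2.
  For the second bound write \<Sigma>_j \<Delta>_ij S_j = \<Sigma>_j \<Delta>_ij (S_j - Q) + (\<Sigma>_j \<Delta>_ij) Q; by symmetry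
  the first term is controlled by the operator norm of the block column \<Delta>_i.\<close>

lemma matrix_add_rdistrib: "(B + C) ** A = B ** A + C ** (A :: 'a::semiring_1^_^_)"
  by (vector matrix_matrix_mult_def sum.distrib[symmetric] field_simps)

lemma sum_matrix_vector_mult: "(\<Sum>j\<in>I. f j) *v (x::real^'n) = (\<Sum>j\<in>I. (f j :: real^'n^'m) *v x)"
  by (induction I rule: infinite_finite_induct) (auto simp: matrix_vector_mult_add_rdistrib)

lemma vector_matrix_mult_sum: "(x::real^'m) v* (\<Sum>j\<in>I. f j) = (\<Sum>j\<in>I. x v* (f j :: real^'n^'m))"
  by (induction I rule: infinite_finite_induct) (auto simp: vector_matrix_mult_add_rdistrib)

lemma transpose_add: "transpose (A + B) = transpose A + transpose (B::'a::plus^'n^'m)"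
  by (simp add: transpose_def vec_eq_iff)

lemma transpose_zero [simp]: "transpose (0::'a::zero^'n^'m) = 0"
  by (simp add: transpose_def vec_eq_iff)

lemma transpose_sum: "transpose (\<Sum>j\<in>I. f j) = (\<Sum>j\<in>I. transpose (f j :: 'a::comm_monoid_add^'n^'m))"
  by (induction I rule: infinite_finite_induct) (auto simp: transpose_add)

lemma norm_matrix_vector_mult_le: "norm ((A::real^'n^'m) *v x) \<le> norm A * norm x"
proof -
  have "(norm (A *v x))\<^sup>2 = (\<Sum>r\<in>UNIV. (A$r \<bullet> x)\<^sup>2)"
    by (simp add: norm_vec_def L2_set_def sum_nonneg matrix_vector_mul_component)
  also have "\<dots> \<le> (\<Sum>r\<in>UNIV. (norm (A$r))\<^sup>2 * (norm x)\<^sup>2)"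
    by (intro sum_mono) (metis Cauchy_Schwarz_ineq2 abs_ge_zero power2_abs power_mono power_mult_distrib)
  also have "\<dots> = (norm A * norm x)\<^sup>2"
    by (simp add: norm_vec_def L2_set_def sum_nonneg sum_distrib_right power_mult_distrib)
  finally show ?thesis
    by (meson mult_nonneg_nonneg norm_ge_zero power2_le_imp_le)
qed

lemma norm_vector_matrix_mult_le:
  fixes A :: "real^'n^'m"
  assumes "\<And>y. norm (A *v y) \<le> c * norm y" and "c \<ge> 0"
  shows "norm (x v* A) \<le> c * norm x"
proof -
  let ?z = "x v* A"
  have "(norm ?z)\<^sup>2 = x \<bullet> (A *v ?z)"
    by (metis dot_lmul_matrix power2_norm_eq_inner transpose_matrix_vector)
  also have "\<dots> \<le> norm x * (c * norm ?z)"
    using norm_cauchy_schwarz assms(1) by (smt (verit) mult_left_mono norm_ge_zero)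
  finally have "norm ?z * norm ?z \<le> (c * norm x) * norm ?z"
    by (simp add: power2_eq_square mult_ac)
  then show ?thesis
    using assms(2) by (cases "norm ?z = 0") (auto simp: mult_le_cancel_right)
qed

lemma opnorm_nonneg: "0 \<le> opnorm (A::real^'n^'m)"
  unfolding opnorm_def by (rule onorm_pos_le) simp

lemma norm_matrix_vector_mult_le_opnorm: "norm ((A::real^'n^'m) *v x) \<le> opnorm A * norm x"
  unfolding opnorm_def by (rule onorm) simp

lemma norm_vector_matrix_mult_le_opnorm: "norm (x v* (A::real^'n^'m)) \<le> opnorm A * norm x"
  by (intro norm_vector_matrix_mult_le norm_matrix_vector_mult_le_opnorm opnorm_nonneg)

lemma norm_vector_matrix_mult_row_orthonormal:
  fixes S :: "real^'p^'d"
  assumes "S ** transpose S = mat 1"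
  shows "norm (x v* S) = norm x"
proof -
  have "(norm (x v* S))\<^sup>2 = x \<bullet> (S *v (x v* S))"
    by (metis dot_lmul_matrix power2_norm_eq_inner transpose_matrix_vector)
  also have "\<dots> = (norm x)\<^sup>2"
    by (metis transpose_matrix_vector matrix_vector_mul_assoc assms matrix_vector_mul_lid
        power2_norm_eq_inner)
  finally show ?thesis by simp
qed

lemma norm_matrix_vector_mult_row_orthonormal_le:
  fixes Q :: "real^'p^'d"
  assumes "Q ** transpose Q = mat 1"
  shows "norm (Q *v y) \<le> norm y"
  using norm_vector_matrix_mult_le[of "transpose Q" 1 y] assms
  by (simp add: norm_vector_matrix_mult_row_orthonormal vector_transpose_matrix)

lemma ex_row_orthonormal:
  assumes "CARD('d) \<le> CARD('p)"
  shows "\<exists>Q :: real^'p^'d. Q ** transpose Q = mat 1"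
proof -
  obtain f :: "'d \<Rightarrow> 'p" where f: "inj f"
    using card_le_inj[of "UNIV::'d set" "UNIV::'p set"] assms by auto
  define Q :: "real^'p^'d" where "Q = (\<chi> r c. if c = f r then 1 else 0)"
  have "(\<Sum>c\<in>UNIV. (if c = f r then 1 else 0) * (if c = f s then 1 else (0::real)))
      = (if r = s then 1 else 0)" for r s
  proof -
    have "(\<Sum>c\<in>UNIV. (if c = f r then 1 else 0) * (if c = f s then 1 else (0::real)))
        = (\<Sum>c\<in>UNIV. if c = f r then (if f r = f s then 1 else 0) else 0)"
      by (rule sum.cong) auto
    then show ?thesis using f by (simp add: inj_eq)
  qed
  then have "Q ** transpose Q = mat 1"
    by (simp add: Q_def vec_eq_iff matrix_matrix_mult_def transpose_def mat_def)
  then show ?thesis by blast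
qed

lemma ex_nonzero_kernel_vector:
  fixes S :: "real^'p^'d"
  assumes "CARD('d) < CARD('p)"
  obtains w where "w \<noteq> 0" and "S *v w = 0"
proof -
  have "\<not> inj ((*v) S)"
  proof
    assume "inj ((*v) S)"
    then have "dim (range ((*v) S)) = dim (UNIV :: (real^'p) set)"
      by (intro dim_image_eq matrix_vector_mul_linear) (auto simp: inj_on_def)
    moreover have "dim (range ((*v) S)) \<le> CARD('d)"
      using dim_subset_UNIV[of "range ((*v) S)"] by simp
    ultimately show False using assms by simp
  qed
  then obtain x y where "x \<noteq> y" "S *v x = S *v y" by (auto simp: inj_def)
  then show thesis
    by (intro that[of "x - y"]) (simp_all add: matrix_vector_mult_diff_distrib)
qed

lemma nonneg_quadratic_imp_linear_coeff_zero:
  fixes a c :: real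
  assumes "\<And>t. 0 \<le> 2 * t * a + t\<^sup>2 * c"
  shows "a = 0"
proof -
  define k where "k = \<bar>c\<bar> + 1"
  have k: "k > 0" and ck: "c - 2 * k < 0" by (auto simp: k_def)
  have "k\<^sup>2 * (2 * (- a / k) * a + (- a / k)\<^sup>2 * c) = a\<^sup>2 * (c - 2 * k)"
    using k by (simp add: field_simps power2_eq_square)
  then have "0 \<le> a\<^sup>2 * (c - 2 * k)"
    using assms[of "- a / k"] by (metis mult_nonneg_nonneg zero_le_power2)
  with ck show ?thesis
    by (smt (verit) mult_pos_neg zero_less_power2)
qed

lemma symmetric_matrix_inner:
  fixes M :: "real^'n^'n"
  assumes "transpose M = M"
  shows "(M *v x) \<bullet> y = x \<bullet> (M *v y)"
  by (metis assms dot_lmul_matrix inner_commute transpose_matrix_vector)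

text \<open>The form at v + t w is a nonnegative quadratic in t vanishing at t = 0, so its linear
  coefficient w^T B v is zero.\<close>
lemma psd_form_zero_imp_kernel:
  fixes B :: "real^'n^'n"
  assumes self_adjoint: "\<And>x y. (B *v x) \<bullet> y = x \<bullet> (B *v y)"
    and psd: "\<And>x. 0 \<le> x \<bullet> (B *v x)" and zero: "v \<bullet> (B *v v) = 0"
  shows "B *v v = 0"
proof -
  have "w \<bullet> (B *v v) = 0" for w
  proof (rule nonneg_quadratic_imp_linear_coeff_zero)
    fix t :: real
    have "0 \<le> (v + t *\<^sub>R w) \<bullet> (B *v (v + t *\<^sub>R w))" by (rule psd)
    also have "\<dots> = 2 * t * (w \<bullet> (B *v v)) + t\<^sup>2 * (w \<bullet> (B *v w))"
      using zero self_adjoint[of v w]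
      by (simp add: matrix_vector_right_distrib matrix_vector_mult_scaleR inner_add_left
          inner_add_right algebra_simps power2_eq_square inner_commute)
    finally show "0 \<le> 2 * t * (w \<bullet> (B *v v)) + t\<^sup>2 * (w \<bullet> (B *v w))" .
  qed
  then show ?thesis by (metis inner_eq_zero_iff)
qed

text \<open>A minimiser of the Rayleigh quotient on the unit sphere is an eigenvector.\<close>
lemma symmetric_matrix_has_eigenvector:
  fixes M :: "real^'n^'n"
  assumes "transpose M = M"
  obtains l v where "v \<noteq> 0" and "M *v v = l *\<^sub>R v"
proof -
  let ?q = "\<lambda>x. x \<bullet> (M *v x)"
  let ?K = "sphere (0::real^'n) 1"
  have "axis undefined 1 \<in> ?K" by (simp add: norm_axis_1)
  then have "?K \<noteq> {}" by blast
  moreover have "continuous_on ?K ?q"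
    by (intro continuous_on_inner continuous_on_id linear_continuous_on
        matrix_vector_mul_bounded_linear)
  ultimately obtain v where "v \<in> ?K" and "\<And>y. y \<in> ?K \<Longrightarrow> ?q v \<le> ?q y"
    using continuous_attains_inf[OF compact_sphere] by blast
  then have v: "norm v = 1" and vmin: "\<And>y. norm y = 1 \<Longrightarrow> ?q v \<le> ?q y" by simp_all
  define B where "B = M - ?q v *\<^sub>R mat 1"
  have Bx: "B *v x = M *v x - ?q v *\<^sub>R x" for x
    by (simp add: B_def matrix_vector_mult_diff_rdistrib scaleR_matrix_vector_assoc[symmetric])
  have "B *v v = 0"
  proof (rule psd_form_zero_imp_kernel)
    show "(B *v x) \<bullet> y = x \<bullet> (B *v y)" for x y
      by (simp add: Bx inner_diff_left inner_diff_right symmetric_matrix_inner[OF assms])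
    show "0 \<le> x \<bullet> (B *v x)" for x
    proof (cases "x = 0")
      case False
      have "?q v \<le> ?q ((1 / norm x) *\<^sub>R x)"
        using False by (intro vmin) simp
      then have "?q v * (norm x)\<^sup>2 \<le> ?q x"
        using False by (simp add: matrix_vector_mult_scaleR field_simps power2_eq_square)
      then show ?thesis by (simp add: Bx inner_diff_right power2_norm_eq_inner)
    qed simp
    show "v \<bullet> (B *v v) = 0"
      using v by (simp add: Bx inner_diff_right power2_norm_eq_inner[symmetric])
  qed
  then have "M *v v = ?q v *\<^sub>R v" by (simp add: Bx)
  with v show thesis by (intro that[of v]) auto
qed

text \<open>Eigenvectors of distinct eigenvalues are orthogonal, hence independent.\<close>
lemma finite_eigenvalues_symmetric_matrix:
  fixes M :: "real^'n^'n"
  assumes "transpose M = M"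
  shows "finite {l. \<exists>v. v \<noteq> 0 \<and> M *v v = l *\<^sub>R v}"
proof -
  define E where "E = {l. \<exists>v. v \<noteq> 0 \<and> M *v v = l *\<^sub>R v}"
  define e where "e l = (SOME v. v \<noteq> 0 \<and> M *v v = l *\<^sub>R v)" for l
  have e: "e l \<noteq> 0 \<and> M *v e l = l *\<^sub>R e l" if "l \<in> E" for l
    using that unfolding E_def e_def by (metis (mono_tags, lifting) mem_Collect_eq someI_ex)
  have inj: "inj_on e E"
  proof (rule inj_onI)
    fix l1 l2 assume "l1 \<in> E" "l2 \<in> E" "e l1 = e l2"
    then have "l1 *\<^sub>R e l1 = l2 *\<^sub>R e l1" using e by metis
    then show "l1 = l2" using e[OF \<open>l1 \<in> E\<close>] by (simp add: scaleR_cancel_right)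
  qed
  have "pairwise orthogonal (e ` E)"
  proof (rule pairwiseI)
    fix x y assume "x \<in> e ` E" "y \<in> e ` E" "x \<noteq> y"
    then obtain l1 l2 where l: "l1 \<in> E" "l2 \<in> E" "x = e l1" "y = e l2" "l1 \<noteq> l2" by blast
    have "l1 * (x \<bullet> y) = (M *v x) \<bullet> y" using e[OF l(1)] l(3) by simp
    also have "\<dots> = x \<bullet> (M *v y)" by (rule symmetric_matrix_inner[OF assms])
    also have "\<dots> = l2 * (x \<bullet> y)" using e[OF l(2)] l(4) by simp
    finally show "orthogonal x y" using l(5) by (simp add: orthogonal_def)
  qed
  moreover have "0 \<notin> e ` E" using e by auto
  ultimately have "finite (e ` E)"
    using pairwise_orthogonal_independent independent_bound by blast
  then show ?thesis using finite_imageD[OF _ inj] by (simp add: E_def)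
qed

lemma lambda_min_eigenvector:
  fixes M :: "real^'n^'n"
  assumes "transpose M = M"
  obtains v where "norm v = 1" and "M *v v = lambda_min M *\<^sub>R v"
proof -
  let ?E = "{l. \<exists>v. v \<noteq> 0 \<and> M *v v = l *\<^sub>R v}"
  have "?E \<noteq> {}" using symmetric_matrix_has_eigenvector[OF assms] by blast
  then have "lambda_min M \<in> ?E"
    unfolding lambda_min_def by (intro Min_in finite_eigenvalues_symmetric_matrix assms)
  then obtain v where "v \<noteq> 0" "M *v v = lambda_min M *\<^sub>R v" by blast
  then have "norm ((1 / norm v) *\<^sub>R v) = 1"
    and "M *v ((1 / norm v) *\<^sub>R v) = lambda_min M *\<^sub>R ((1 / norm v) *\<^sub>R v)"
    by (simp_all add: matrix_vector_mult_scaleR)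
  then show thesis by (rule that)
qed

lemma col_opnorm_upper:
  assumes "norm (y::real^'d) = 1"
  shows "sqrt (\<Sum>j<n. (norm (\<Delta> j i *v y))\<^sup>2) \<le> col_opnorm n \<Delta> i"
proof -
  have "sqrt (\<Sum>j<n. (norm (\<Delta> j i *v y))\<^sup>2) \<le> sqrt (\<Sum>j<n. (norm (\<Delta> j i))\<^sup>2)"
    if "norm y = 1" for y :: "real^'d"
    using that norm_matrix_vector_mult_le[of "\<Delta> j i" y for j]
    by (intro real_sqrt_le_mono sum_mono power_mono) auto
  then have "bdd_above {sqrt (\<Sum>j<n. (norm (\<Delta> j i *v y))\<^sup>2) | y :: real^'d. norm y = 1}"
    unfolding bdd_above_def by blast
  then show ?thesis
    unfolding col_opnorm_def by (rule cSup_upper[rotated]) (use assms in blast)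
qed

lemma col_opnorm_nonneg: "0 \<le> col_opnorm n (\<Delta>::nat \<Rightarrow> nat \<Rightarrow> real^'d^'d) i"
  using col_opnorm_upper[OF norm_axis_1[of undefined], where n=n and \<Delta>=\<Delta> and i=i]
  by (meson order_trans real_sqrt_ge_zero sum_nonneg zero_le_power2)

text \<open>By symmetry the block row (\<Delta>_i1, ..., \<Delta>_in) is the transpose of the block column \<Delta>_i,
  so duality bounds it by the operator norm of \<Delta>_i.\<close>
lemma norm_block_row_mult_le:
  fixes \<Delta> :: "nat \<Rightarrow> nat \<Rightarrow> real^'d^'d" and x :: "nat \<Rightarrow> real^'d"
  assumes sym: "\<forall>j<n. \<Delta> j i = transpose (\<Delta> i j)"
  shows "norm (\<Sum>j<n. \<Delta> i j *v x j) \<le> col_opnorm n \<Delta> i * sqrt (\<Sum>j<n. (norm (x j))\<^sup>2)"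
proof (cases "(\<Sum>j<n. \<Delta> i j *v x j) = 0")
  case True
  then show ?thesis using col_opnorm_nonneg[of n \<Delta> i] by (simp add: sum_nonneg)
next
  case False
  define w where "w = (\<Sum>j<n. \<Delta> i j *v x j)"
  define u where "u = (1 / norm w) *\<^sub>R w"
  have u: "norm u = 1" using False by (simp add: u_def w_def)
  have "norm w = u \<bullet> w"
    using False by (simp add: u_def w_def power2_norm_eq_inner[symmetric] power2_eq_square)
  also have "\<dots> = (\<Sum>j<n. (\<Delta> j i *v u) \<bullet> x j)"
    unfolding w_def inner_sum_right using sym
    by (intro sum.cong refl) (simp, metis dot_lmul_matrix inner_commute)
  also have "\<dots> \<le> (\<Sum>j<n. \<bar>norm (\<Delta> j i *v u)\<bar> * \<bar>norm (x j)\<bar>)"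
    by (intro sum_mono) (simp add: norm_cauchy_schwarz)
  also have "\<dots> \<le> L2_set (\<lambda>j. norm (\<Delta> j i *v u)) {..<n} * L2_set (\<lambda>j. norm (x j)) {..<n}"
    by (rule L2_set_mult_ineq)
  also have "\<dots> \<le> col_opnorm n \<Delta> i * sqrt (\<Sum>j<n. (norm (x j))\<^sup>2)"
    unfolding L2_set_def
    by (intro mult_right_mono col_opnorm_upper[OF u]) (simp add: sum_nonneg)
  finally show ?thesis by (simp add: w_def)
qed

lemma le_dF:
  assumes "CARD('d) \<le> CARD('p)"
    and "\<And>Q :: real^'p^'d. Q ** transpose Q = mat 1 \<Longrightarrow> z \<le> sqrt (\<Sum>j<n. (norm (S j - Q))\<^sup>2)"
  shows "z \<le> dF n (S :: nat \<Rightarrow> real^'p^'d)"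
proof -
  obtain Q0 :: "real^'p^'d" where "Q0 ** transpose Q0 = mat 1"
    using ex_row_orthonormal[OF assms(1)] by blast
  then show ?thesis
    unfolding dF_def using assms(2) by (intro cInf_greatest) auto
qed

lemma dF_nonneg:
  assumes "CARD('d) \<le> CARD('p)"
  shows "0 \<le> dF n (S :: nat \<Rightarrow> real^'p^'d)"
  by (rule le_dF[OF assms]) (simp add: sum_nonneg)

lemma le_affine_dF:
  assumes "CARD('d) \<le> CARD('p)" and "c \<ge> 0"
    and "\<And>Q :: real^'p^'d. Q ** transpose Q = mat 1 \<Longrightarrow> a \<le> c * sqrt (\<Sum>j<n. (norm (S j - Q))\<^sup>2) + b"
  shows "a \<le> c * dF n (S :: nat \<Rightarrow> real^'p^'d) + b"
proof (cases "c = 0")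
  case True
  obtain Q0 :: "real^'p^'d" where "Q0 ** transpose Q0 = mat 1"
    using ex_row_orthonormal[OF assms(1)] by blast
  with True assms(3) show ?thesis by simp
next
  case False
  with assms(2) have "c > 0" by simp
  have "(a - b) / c \<le> sqrt (\<Sum>j<n. (norm (S j - Q))\<^sup>2)"
    if "Q ** transpose Q = mat 1" for Q :: "real^'p^'d"
  proof -
    have "a - b \<le> c * sqrt (\<Sum>j<n. (norm (S j - Q))\<^sup>2)" using assms(3)[OF that] by linarith
    with \<open>c > 0\<close> show ?thesis by (simp add: pos_divide_le_eq mult.commute)
  qed
  then have "(a - b) / c \<le> dF n S" by (rule le_dF[OF assms(1)])
  with \<open>c > 0\<close> show ?thesis by (simp add: divide_le_eq mult.commute)
qed

lemma le_dF_squared: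
  assumes "CARD('d) \<le> CARD('p)"
    and "\<And>Q :: real^'p^'d. Q ** transpose Q = mat 1 \<Longrightarrow> c \<le> (\<Sum>j<n. (norm (S j - Q))\<^sup>2)"
  shows "c \<le> (dF n (S :: nat \<Rightarrow> real^'p^'d))\<^sup>2"
proof (cases "c \<le> 0")
  case False
  have "sqrt c \<le> dF n S"
    using assms(2) by (intro le_dF[OF assms(1)]) simp
  with False show ?thesis
    by (metis le_less not_le real_sqrt_ge_zero real_sqrt_le_iff real_sqrt_pow2 power_mono)
qed (smt (verit) zero_le_power2)

lemma Lam_symmetric:
  fixes \<Delta> :: "nat \<Rightarrow> nat \<Rightarrow> real^'d^'d" and S :: "nat \<Rightarrow> real^'p^'d"
  assumes sym: "\<forall>i<n. \<forall>j<n. \<Delta> j i = transpose (\<Delta> i j)" and i: "i < n"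
  shows "transpose (Lam n \<Delta> S i) = Lam n \<Delta> S i"
proof -
  have A: "transpose (Ablk \<Delta> j i) = Ablk \<Delta> i j" "transpose (Ablk \<Delta> i j) = Ablk \<Delta> j i"
    if "j < n" for j
  proof -
    have "\<Delta> j i = transpose (\<Delta> i j)" using sym that i by blast
    then show "transpose (Ablk \<Delta> j i) = Ablk \<Delta> i j" "transpose (Ablk \<Delta> i j) = Ablk \<Delta> j i"
      by (simp_all add: Ablk_def transpose_add)
  qed
  have "transpose (S i ** transpose (S j) ** Ablk \<Delta> j i + Ablk \<Delta> i j ** S j ** transpose (S i))
      = S i ** transpose (S j) ** Ablk \<Delta> j i + Ablk \<Delta> i j ** S j ** transpose (S i)"
    if "j < n" for j
    by (simp only: transpose_add matrix_transpose_mul transpose_transpose A[OF that]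
        matrix_mul_assoc add.commute)
  then show ?thesis
    unfolding Lam_def transpose_scalar transpose_sum by (intro arg_cong[where f="(*\<^sub>R) _"] sum.cong) auto
qed

definition outer_product :: "real^'d \<Rightarrow> real^'p \<Rightarrow> real^'p^'d" where
  "outer_product v w = (\<chi> r c. v$r * w$c)"

lemma inner_outer_product_gram:
  fixes M :: "real^'d^'d"
  shows "M \<bullet> (outer_product v w ** transpose (outer_product v w)) = (w \<bullet> w) * (v \<bullet> (M *v v))"
proof -
  have "outer_product v w ** transpose (outer_product v w) = (w \<bullet> w) *\<^sub>R (\<chi> r s. v$r * v$s)"
    by (simp add: outer_product_def vec_eq_iff matrix_matrix_mult_def transpose_def inner_vec_def
        sum_distrib_left mult_ac)
  then show ?thesis
    by (simp add: inner_vec_def matrix_vector_mult_def sum_distrib_left mult_ac)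
qed

lemma outer_product_tangent:
  fixes S :: "real^'p^'d"
  assumes "S *v w = 0"
  shows "outer_product v w \<in> tangent S"
proof -
  have "(\<Sum>c\<in>UNIV. S$r$c * w$c) = 0" for r
    using assms by (simp add: vec_eq_iff matrix_vector_mult_def)
  moreover have "(\<Sum>c\<in>UNIV. S$r$c * (v$s * w$c)) = v$s * (\<Sum>c\<in>UNIV. S$r$c * w$c)"
    and "(\<Sum>c\<in>UNIV. v$s * w$c * S$r$c) = v$s * (\<Sum>c\<in>UNIV. S$r$c * w$c)" for r s
    by (simp_all add: sum_distrib_left mult_ac)
  ultimately show ?thesis
    by (simp add: tangent_def outer_product_def vec_eq_iff matrix_matrix_mult_def transpose_def)
qed

text \<open>Test the second-order condition with the direction that is v w^T in block i and zero
  elsewhere, where S_i w = 0 (possible as p > d); since \<Delta>_ii = 0 its right-hand side is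
  |w|^2 |v|^2.\<close>
lemma Lam_eigenvalue_ge_1:
  fixes \<Delta> :: "nat \<Rightarrow> nat \<Rightarrow> real^'d^'d" and S :: "nat \<Rightarrow> real^'p^'d"
  assumes i: "i < n" and diag: "\<Delta> i i = 0" and p: "CARD('d) < CARD('p)"
    and crit: "second_order_critical n \<Delta> S"
    and v: "v \<noteq> 0" and ev: "Lam n \<Delta> S i *v v = l *\<^sub>R v"
  shows "l \<ge> 1"
proof -
  obtain w :: "real^'p" where w: "w \<noteq> 0" "S i *v w = 0"
    using ex_nonzero_kernel_vector[OF p] by blast
  define Y where "Y = outer_product v w"
  define Sd where "Sd = (\<lambda>k. if k = i then Y else 0)"
  have "\<forall>k<n. Sd k \<in> tangent (S k)"
    using outer_product_tangent[OF w(2)] by (auto simp: Sd_def Y_def tangent_def)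
  then have "(\<Sum>k<n. \<Sum>m<n. Ablk \<Delta> k m \<bullet> (Sd k ** transpose (Sd m)))
      \<le> (\<Sum>k<n. Lam n \<Delta> S k \<bullet> (Sd k ** transpose (Sd k)))"
    using crit unfolding second_order_critical_def by blast
  moreover have "Ablk \<Delta> k m \<bullet> (Sd k ** transpose (Sd m))
      = (if m = i then if k = i then mat 1 \<bullet> (Y ** transpose Y) else 0 else 0)" for k m
    using diag by (simp add: Sd_def Ablk_def)
  moreover have "Lam n \<Delta> S k \<bullet> (Sd k ** transpose (Sd k))
      = (if k = i then Lam n \<Delta> S i \<bullet> (Y ** transpose Y) else 0)" for k
    by (simp add: Sd_def)
  ultimately have "(w \<bullet> w) * (v \<bullet> v) \<le> (w \<bullet> w) * (l * (v \<bullet> v))"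
    using i by (simp add: Y_def inner_outer_product_gram ev)
  moreover have "(w \<bullet> w) * (v \<bullet> v) > 0" using v w by simp
  ultimately show ?thesis
    by (metis mult.assoc mult.commute mult_le_cancel_left_pos mult_1)
qed

lemma Lam_mult_S:
  assumes "second_order_critical n \<Delta> S" and "i < n"
  shows "Lam n \<Delta> S i ** S i = (\<Sum>j<n. S j) + (\<Sum>j<n. \<Delta> i j ** S j)"
proof -
  have "Lam n \<Delta> S i ** S i = (\<Sum>j<n. Ablk \<Delta> i j ** S j)"
    using assms unfolding second_order_critical_def by simp
  then show ?thesis
    by (simp add: Ablk_def matrix_add_rdistrib sum.distrib)
qed

lemma inner_unit_vectors:
  fixes a b :: "'a::real_inner"
  assumes "norm a = 1" and "norm b = 1"
  shows "a \<bullet> b = 1 - (norm (b - a))\<^sup>2 / 2"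
proof -
  have "a \<bullet> a = 1" and "b \<bullet> b = 1" using assms by (simp_all add: norm_eq_1)
  then show ?thesis
    by (simp add: power2_norm_eq_inner inner_diff_left inner_diff_right inner_commute field_simps)
qed

text \<open>Each x^T S_j is a unit vector at distance at most |S_j - Q| from the unit vector x^T Q.\<close>
lemma norm_vector_matrix_mult_sum_ge:
  fixes S :: "nat \<Rightarrow> real^'p^'d" and Q :: "real^'p^'d"
  assumes orth: "\<forall>j\<in>I. S j ** transpose (S j) = mat 1" and Q: "Q ** transpose Q = mat 1"
    and x: "norm x = 1"
  shows "real (card I) - (\<Sum>j\<in>I. (norm (S j - Q))\<^sup>2) / 2 \<le> norm (x v* (\<Sum>j\<in>I. S j))"
proof -
  have xQ: "norm (x v* Q) = 1"
    using Q x by (simp add: norm_vector_matrix_mult_row_orthonormal)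
  have "1 - (norm (S j - Q))\<^sup>2 / 2 \<le> (x v* Q) \<bullet> (x v* S j)" if "j \<in> I" for j
  proof -
    have "norm (x v* S j - x v* Q) \<le> norm (S j - Q)"
      using norm_vector_matrix_mult_le[OF norm_matrix_vector_mult_le, of "S j - Q" x] x
      by (simp add: vector_matrix_mult_diff_rdistrib)
    then have "(norm (x v* S j - x v* Q))\<^sup>2 \<le> (norm (S j - Q))\<^sup>2"
      by (simp add: power_mono)
    moreover have "norm (x v* S j) = 1"
      using orth that x by (simp add: norm_vector_matrix_mult_row_orthonormal)
    ultimately show ?thesis
      using inner_unit_vectors[OF xQ] by simp
  qed
  then have "real (card I) - (\<Sum>j\<in>I. (norm (S j - Q))\<^sup>2) / 2 \<le> (\<Sum>j\<in>I. (x v* Q) \<bullet> (x v* S j))"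
    using sum_mono[of I "\<lambda>j. 1 - (norm (S j - Q))\<^sup>2 / 2"]
    by (simp add: sum_subtractf sum_divide_distrib)
  also have "\<dots> = (x v* Q) \<bullet> (x v* (\<Sum>j\<in>I. S j))"
    by (simp add: vector_matrix_mult_sum inner_sum_right)
  also have "\<dots> \<le> norm (x v* (\<Sum>j\<in>I. S j))"
    using norm_cauchy_schwarz[of "x v* Q"] xQ by simp
  finally show ?thesis .
qed

text \<open>For a unit eigenvector v with eigenvalue l \<ge> 0, l = |v^T \<Lambda>_ii S_i|, and
  \<Lambda>_ii S_i = \<Sigma>_j S_j + \<Sigma>_j \<Delta>_ij S_j by first-order criticality.\<close>
lemma Lam_eigenvalue_ge:
  fixes \<Delta> :: "nat \<Rightarrow> nat \<Rightarrow> real^'d^'d" and S :: "nat \<Rightarrow> real^'p^'d" and Q :: "real^'p^'d"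
  assumes i: "i < n" and sym: "\<forall>i<n. \<forall>j<n. \<Delta> j i = transpose (\<Delta> i j)"
    and orth: "\<forall>j<n. S j ** transpose (S j) = mat 1"
    and crit: "second_order_critical n \<Delta> S" and Q: "Q ** transpose Q = mat 1"
    and v: "norm v = 1" and ev: "Lam n \<Delta> S i *v v = l *\<^sub>R v" and l: "l \<ge> 0"
  shows "real n - (\<Sum>j<n. (norm (S j - Q))\<^sup>2) / 2 - opnorm (\<Sum>j<n. \<Delta> i j ** S j) \<le> l"
proof -
  let ?G = "\<Sum>j<n. S j" and ?W = "\<Sum>j<n. \<Delta> i j ** S j"
  have "v v* Lam n \<Delta> S i = l *\<^sub>R v"
    by (metis Lam_symmetric[OF sym i] ev transpose_matrix_vector)
  then have "v v* (?G + ?W) = l *\<^sub>R (v v* S i)"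
    by (simp add: Lam_mult_S[OF crit i, symmetric] vector_matrix_mul_assoc[symmetric]
        scaleR_vector_matrix_assoc)
  then have "norm (v v* (?G + ?W)) = l"
    using orth i v l by (simp add: norm_vector_matrix_mult_row_orthonormal)
  then have "norm (v v* ?G) - opnorm ?W \<le> l"
    using norm_vector_matrix_mult_le_opnorm[of v ?W] v norm_triangle_ineq2[of "v v* ?G" "- (v v* ?W)"]
    by (simp add: vector_matrix_mult_add_rdistrib)
  moreover have "real n - (\<Sum>j<n. (norm (S j - Q))\<^sup>2) / 2 \<le> norm (v v* ?G)"
    using norm_vector_matrix_mult_sum_ge[of "{..<n}" S Q v] orth Q v by simp
  ultimately show ?thesis by linarith
qed

lemma opnorm_block_row_mult_le:
  fixes \<Delta> :: "nat \<Rightarrow> nat \<Rightarrow> real^'d^'d" and S :: "nat \<Rightarrow> real^'p^'d" and Q :: "real^'p^'d"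
  assumes sym: "\<forall>j<n. \<Delta> j i = transpose (\<Delta> i j)" and Q: "Q ** transpose Q = mat 1"
  shows "opnorm (\<Sum>j<n. \<Delta> i j ** S j) \<le>
    col_opnorm n \<Delta> i * sqrt (\<Sum>j<n. (norm (S j - Q))\<^sup>2) + opnorm (\<Sum>j<n. \<Delta> i j)"
  unfolding opnorm_def[of "\<Sum>j<n. \<Delta> i j ** S j"]
proof (rule onorm_le)
  fix y :: "real^'p"
  let ?c = "col_opnorm n \<Delta> i" and ?t = "sqrt (\<Sum>j<n. (norm (S j - Q))\<^sup>2)"
  have "(\<Sum>j<n. \<Delta> i j ** S j) *v y
      = (\<Sum>j<n. \<Delta> i j *v ((S j - Q) *v y)) + (\<Sum>j<n. \<Delta> i j) *v (Q *v y)"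
  proof -
    have "(\<Sum>j<n. \<Delta> i j ** S j) *v y = (\<Sum>j<n. \<Delta> i j *v ((S j - Q) *v y) + \<Delta> i j *v (Q *v y))"
      by (simp add: sum_matrix_vector_mult matrix_vector_mul_assoc[symmetric]
          matrix_vector_mult_diff_rdistrib matrix_vector_mult_diff_distrib)
    then show ?thesis by (simp add: sum.distrib sum_matrix_vector_mult)
  qed
  moreover have "norm (\<Sum>j<n. \<Delta> i j *v ((S j - Q) *v y)) \<le> ?c * ?t * norm y"
  proof -
    have "norm (\<Sum>j<n. \<Delta> i j *v ((S j - Q) *v y)) \<le> ?c * sqrt (\<Sum>j<n. (norm ((S j - Q) *v y))\<^sup>2)"
      by (rule norm_block_row_mult_le[OF sym])
    also have "\<dots> \<le> ?c * sqrt (\<Sum>j<n. (norm (S j - Q) * norm y)\<^sup>2)"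
      by (intro mult_left_mono col_opnorm_nonneg real_sqrt_le_mono sum_mono power_mono
          norm_matrix_vector_mult_le) simp
    also have "\<dots> = ?c * ?t * norm y"
      by (simp add: power_mult_distrib sum_distrib_right[symmetric] real_sqrt_mult)
    finally show ?thesis .
  qed
  moreover have "norm ((\<Sum>j<n. \<Delta> i j) *v (Q *v y)) \<le> opnorm (\<Sum>j<n. \<Delta> i j) * norm y"
    using norm_matrix_vector_mult_le_opnorm[of "\<Sum>j<n. \<Delta> i j" "Q *v y"]
      norm_matrix_vector_mult_row_orthonormal_le[OF Q, of y] opnorm_nonneg[of "\<Sum>j<n. \<Delta> i j"]
    by (meson mult_left_mono order_trans)
  ultimately show "norm ((\<Sum>j<n. \<Delta> i j ** S j) *v y) \<le> (?c * ?t + opnorm (\<Sum>j<n. \<Delta> i j)) * norm y"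
    by (smt (verit) distrib_right norm_triangle_ineq)
qed

lemma lambda_min_Lam_ge:
  fixes \<Delta> :: "nat \<Rightarrow> nat \<Rightarrow> real^'d^'d" and S :: "nat \<Rightarrow> real^'p^'d"
  assumes i: "i < n" and p: "CARD('d) < CARD('p)"
    and sym: "\<forall>i<n. \<forall>j<n. \<Delta> j i = transpose (\<Delta> i j)" and diag: "\<Delta> i i = 0"
    and orth: "\<forall>j<n. S j ** transpose (S j) = mat 1" and crit: "second_order_critical n \<Delta> S"
  shows "real n - (dF n S)\<^sup>2 / 2 - opnorm (\<Sum>j<n. \<Delta> i j ** S j) \<le> lambda_min (Lam n \<Delta> S i)"
proof -
  let ?l = "lambda_min (Lam n \<Delta> S i)" and ?a = "opnorm (\<Sum>j<n. \<Delta> i j ** S j)"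
  obtain v where v: "norm v = 1" and ev: "Lam n \<Delta> S i *v v = ?l *\<^sub>R v"
    using lambda_min_eigenvector[OF Lam_symmetric[OF sym i]] by blast
  have "?l \<ge> 1"
    using v by (intro Lam_eigenvalue_ge_1[OF i diag p crit _ ev]) auto
  then have "2 * (real n - ?a - ?l) \<le> (\<Sum>j<n. (norm (S j - Q))\<^sup>2)"
    if "Q ** transpose Q = mat 1" for Q :: "real^'p^'d"
    using Lam_eigenvalue_ge[OF i sym orth crit that v ev] by simp
  then have "2 * (real n - ?a - ?l) \<le> (dF n S)\<^sup>2"
    using p by (intro le_dF_squared) simp_all
  then show ?thesis by simp
qed

lemma opnorm_block_row_mult_le_dF:
  fixes \<Delta> :: "nat \<Rightarrow> nat \<Rightarrow> real^'d^'d" and S :: "nat \<Rightarrow> real^'p^'d"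
  assumes "CARD('d) \<le> CARD('p)" and "\<forall>j<n. \<Delta> j i = transpose (\<Delta> i j)"
  shows "opnorm (\<Sum>j<n. \<Delta> i j ** S j) \<le> col_opnorm n \<Delta> i * dF n S + opnorm (\<Sum>j<n. \<Delta> i j)"
  by (intro le_affine_dF assms col_opnorm_nonneg opnorm_block_row_mult_le)

theorem lemma5:
  fixes n :: nat and \<Delta> :: "nat \<Rightarrow> nat \<Rightarrow> real^'d^'d" and S :: "nat \<Rightarrow> real^'p^'d"
    and \<delta> :: real
  assumes n: "n \<ge> 1"
    and p: "CARD('p) > CARD('d)"
    and sym: "\<forall>i<n. \<forall>j<n. \<Delta> j i = transpose (\<Delta> i j)"
    and diag: "\<forall>i<n. \<Delta> i i = 0"
    and \<delta>: "\<delta> > 0"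
    and orth: "\<forall>i<n. S i ** transpose (S i) = mat 1"
    and crit: "second_order_critical n \<Delta> S"
    and close: "dF n S \<le> \<delta> * sqrt (real CARD('d) / real n) * blk_opnorm n \<Delta>"
  shows "(\<forall>i<n. lambda_min (Lam n \<Delta> S i) \<ge>
            real n - \<delta>\<^sup>2 * real CARD('d) * (blk_opnorm n \<Delta>)\<^sup>2 / (2 * real n)
            - Max ((\<lambda>k. opnorm (\<Sum>j\<in>{..<n} - {k}. \<Delta> k j ** S j)) ` {..<n}))
       \<and> Max ((\<lambda>i. opnorm (\<Sum>j\<in>{..<n} - {i}. \<Delta> i j ** S j)) ` {..<n})
          \<le> \<delta> * sqrt (real CARD('d) / real n) * blk_opnorm n \<Delta>
               * Max ((\<lambda>i. col_opnorm n \<Delta> i) ` {..<n})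
            + Max ((\<lambda>i. opnorm (\<Sum>j<n. \<Delta> i j)) ` {..<n})"
proof -
  let ?B = "\<delta> * sqrt (real CARD('d) / real n) * blk_opnorm n \<Delta>"
  let ?W = "\<lambda>i. opnorm (\<Sum>j\<in>{..<n} - {i}. \<Delta> i j ** S j)"
  let ?C = "Max ((\<lambda>i. col_opnorm n \<Delta> i) ` {..<n})"
  let ?R = "Max ((\<lambda>i. opnorm (\<Sum>j<n. \<Delta> i j)) ` {..<n})"
  have W: "?W i = opnorm (\<Sum>j<n. \<Delta> i j ** S j)" if "i < n" for i
    using that diag by (simp add: sum.remove[of "{..<n}" i])
  have dF: "0 \<le> dF n S" using p by (intro dF_nonneg) simp
  have "(dF n S)\<^sup>2 / 2 \<le> \<delta>\<^sup>2 * real CARD('d) * (blk_opnorm n \<Delta>)\<^sup>2 / (2 * real n)"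
    using power_mono[OF close dF, of 2]
    by (simp add: power_mult_distrib real_sqrt_pow2 divide_nonneg_nonneg)
  moreover have "?W i \<le> Max (?W ` {..<n})" if "i < n" for i
    using that by (intro Max_ge) auto
  ultimately have part1: "\<forall>i<n. lambda_min (Lam n \<Delta> S i) \<ge>
      real n - \<delta>\<^sup>2 * real CARD('d) * (blk_opnorm n \<Delta>)\<^sup>2 / (2 * real n) - Max (?W ` {..<n})"
    using lambda_min_Lam_ge[OF _ p sym _ orth crit] W diag by (smt (verit))
  have "?W i \<le> ?B * ?C + ?R" if i: "i < n" for i
  proof -
    have "opnorm (\<Sum>j<n. \<Delta> i j ** S j) \<le> col_opnorm n \<Delta> i * dF n S + opnorm (\<Sum>j<n. \<Delta> i j)"
      using p sym i by (intro opnorm_block_row_mult_le_dF) (simp, blast)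
    moreover have "col_opnorm n \<Delta> i * dF n S \<le> ?C * ?B"
      using i close dF col_opnorm_nonneg by (intro mult_mono' Max_ge) auto
    moreover have "opnorm (\<Sum>j<n. \<Delta> i j) \<le> ?R"
      using i by (intro Max_ge) auto
    ultimately show ?thesis
      using W[OF i] by (smt (verit) mult.commute)
  qed
  then have "Max (?W ` {..<n}) \<le> ?B * ?C + ?R"
    using n by (subst Max_le_iff) (auto simp: lessThan_empty_iff)
  with part1 show ?thesis by blast
qed

end
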